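(* Let $G$ be a finitely generated group, $N$ a characteristic subgroup of $G$, and $Q=G/N$. Then $\alpha_Q\preccurlyeq\alpha_G$.
   Context: For a finitely generated group $G$ with finite generating set $\Sigma$, the automorphic growth function sends $n$ to the number of $\operatorname{Aut}(G)$-orbits of $G$ containing an element of word length at most $n$; $\alpha_G$ denotes its class under $\sim$ (independent of $\Sigma$). For non-decreasing non-zero $f,g\colon\mathbb{N}\to\mathbb{N}$, $f\preccurlyeq g$ means there is $\lambda\in\mathbb{N}\setminus\{0\}$ with $f(n)\le\lambda g(\lambda n+\lambda)+\lambda$ for all $n$, and $f\sim g$ means both $f\preccurlyeq g$ and $g\preccurlyeq f$; $\preccurlyeq$ induces a partial order on $\sim$-classes. *)

theory Defs
  imports "HOL-Algebra.Algebra"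
begin

definition word_ball :: "('a, 'b) monoid_scheme \<Rightarrow> 'a set \<Rightarrow> nat \<Rightarrow> 'a set" where
  "word_ball G S n = {foldr (\<otimes>\<^bsub>G\<^esub>) xs \<one>\<^bsub>G\<^esub> | xs.
      length xs \<le> n \<and> set xs \<subseteq> S \<union> (\<lambda>s. inv\<^bsub>G\<^esub> s) ` S}"

definition aut_orbit :: "('a, 'b) monoid_scheme \<Rightarrow> 'a \<Rightarrow> 'a set" where
  "aut_orbit G g = (\<lambda>\<phi>. \<phi> g) ` auto G"

definition aut_growth :: "('a, 'b) monoid_scheme \<Rightarrow> 'a set \<Rightarrow> nat \<Rightarrow> nat" where
  "aut_growth G S n = card (aut_orbit G ` word_ball G S n)"

definition growth_le :: "(nat \<Rightarrow> nat) \<Rightarrow> (nat \<Rightarrow> nat) \<Rightarrow> bool" (infix \<open>\<preccurlyeq>\<close> 50) where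
  "f \<preccurlyeq> g \<longleftrightarrow> (\<exists>c::nat. c \<noteq> 0 \<and> (\<forall>n. f n \<le> c * g (c * n + c) + c))"

definition finite_gen_set :: "('a, 'b) monoid_scheme \<Rightarrow> 'a set \<Rightarrow> bool" where
  "finite_gen_set G S \<longleftrightarrow> finite S \<and> S \<subseteq> carrier G \<and> generate G S = carrier G"

definition characteristic :: "'a set \<Rightarrow> ('a, 'b) monoid_scheme \<Rightarrow> bool" where
  "characteristic N G \<longleftrightarrow> subgroup N G \<and> (\<forall>\<phi>\<in>auto G. \<phi> ` N = N)"

end

theory Submission
  imports Defs
begin

text \<open>Write \<open>\<pi> : G \<rightarrow> Q = G/N\<close> for the quotient map. Lifting each letter of the
  generating set of \<open>Q\<close> to a word in the generators of \<open>G\<close> gives a constant \<open>K\<close> with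
  \<open>B\<^sub>Q(n) \<subseteq> \<pi>(B\<^sub>G(K n))\<close> for the word balls. Since \<open>N\<close> is characteristic, every
  automorphism \<open>\<phi>\<close> of \<open>G\<close> induces the automorphism \<open>gN \<mapsto> \<phi>(g)N\<close> of \<open>Q\<close>, so \<open>\<pi>\<close> maps
  \<open>Aut(G)\<close>-orbits into \<open>Aut(Q)\<close>-orbits. Hence the \<open>Aut(Q)\<close>-orbits meeting \<open>B\<^sub>Q(n)\<close> are
  images of \<open>Aut(G)\<close>-orbits meeting \<open>B\<^sub>G(K n)\<close>, and there are at most as many of them.\<close>

lemma card_image_le_card_image:
  assumes "finite A" and "\<And>x y. x \<in> A \<Longrightarrow> y \<in> A \<Longrightarrow> g x = g y \<Longrightarrow> f x = f y"
  shows "card (f ` A) \<le> card (g ` A)"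
proof -
  have "f x = f (inv_into A g (g x))" if "x \<in> A" for x
  proof (rule assms(2)[OF that])
    show "inv_into A g (g x) \<in> A" "g x = g (inv_into A g (g x))"
      using that by (simp_all add: inv_into_into f_inv_into_f[OF imageI[OF that]])
  qed
  then have "f ` A = (f \<circ> inv_into A g) ` (g ` A)"
    unfolding image_comp by (simp cong: image_cong)
  then show ?thesis
    using assms(1) by (simp add: card_image_le)
qed

lemma (in monoid) foldr_mult_closed:
  "set xs \<subseteq> carrier G \<Longrightarrow> y \<in> carrier G \<Longrightarrow> foldr (\<otimes>) xs y \<in> carrier G"
  by (induction xs) auto

lemma (in monoid) foldr_mult_eq:
  "set xs \<subseteq> carrier G \<Longrightarrow> y \<in> carrier G \<Longrightarrow> foldr (\<otimes>) xs y = foldr (\<otimes>) xs \<one> \<otimes> y"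
  by (induction xs) (auto simp: m_assoc foldr_mult_closed)

lemma word_ball_mono: "m \<le> n \<Longrightarrow> word_ball G S m \<subseteq> word_ball G S n"
  unfolding word_ball_def by force

lemma finite_word_ball: "finite S \<Longrightarrow> finite (word_ball G S n)"
proof -
  assume "finite S"
  have "word_ball G S n = (\<lambda>xs. foldr (\<otimes>\<^bsub>G\<^esub>) xs \<one>\<^bsub>G\<^esub>) `
      {xs. set xs \<subseteq> S \<union> (\<lambda>s. inv\<^bsub>G\<^esub> s) ` S \<and> length xs \<le> n}"
    unfolding word_ball_def by blast
  then show ?thesis
    using finite_lists_length_le[of "S \<union> (\<lambda>s. inv\<^bsub>G\<^esub> s) ` S" n] \<open>finite S\<close> by simp
qed

lemma one_in_word_ball: "\<one>\<^bsub>G\<^esub> \<in> word_ball G S n"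
  unfolding word_ball_def by (intro CollectI exI[of _ "[]"]) auto

context group
begin

lemma word_ball_subset_carrier:
  assumes "S \<subseteq> carrier G"
  shows "word_ball G S n \<subseteq> carrier G"
proof
  fix x assume "x \<in> word_ball G S n"
  then obtain xs where "x = foldr (\<otimes>) xs \<one>" "set xs \<subseteq> S \<union> (\<lambda>s. inv s) ` S"
    unfolding word_ball_def by blast
  moreover have "S \<union> (\<lambda>s. inv s) ` S \<subseteq> carrier G"
    using assms by auto
  ultimately show "x \<in> carrier G"
    using foldr_mult_closed[of xs \<one>] by auto
qed

lemma word_ball_mult:
  assumes "S \<subseteq> carrier G" "x \<in> word_ball G S a" "y \<in> word_ball G S b"
  shows "x \<otimes> y \<in> word_ball G S (a + b)"
proof -
  obtain xs where xs: "x = foldr (\<otimes>) xs \<one>" "length xs \<le> a" "set xs \<subseteq> S \<union> (\<lambda>s. inv s) ` S"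
    using assms(2) unfolding word_ball_def by blast
  obtain ys where ys: "y = foldr (\<otimes>) ys \<one>" "length ys \<le> b" "set ys \<subseteq> S \<union> (\<lambda>s. inv s) ` S"
    using assms(3) unfolding word_ball_def by blast
  have "set xs \<subseteq> carrier G" "y \<in> carrier G"
    using xs(3) assms word_ball_subset_carrier[OF assms(1)] by auto
  then have "foldr (\<otimes>) (xs @ ys) \<one> = x \<otimes> y"
    using xs(1) ys(1) foldr_mult_eq[of xs y] by simp
  then show ?thesis
    unfolding word_ball_def using xs ys by (intro CollectI exI[of _ "xs @ ys"]) auto
qed

lemma letter_in_word_ball:
  assumes "S \<subseteq> carrier G" "x \<in> S \<union> (\<lambda>s. inv s) ` S"
  shows "x \<in> word_ball G S 1"
proof -
  have "foldr (\<otimes>) [x] \<one> = x"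
    using assms by auto
  then show ?thesis
    unfolding word_ball_def using assms(2) by (intro CollectI exI[of _ "[x]"]) auto
qed

lemma generate_in_word_ball:
  assumes "S \<subseteq> carrier G" "g \<in> generate G S"
  shows "\<exists>n. g \<in> word_ball G S n"
  using assms(2)
proof (induction rule: generate.induct)
  case one
  then show ?case using one_in_word_ball by blast
next
  case (incl h)
  then show ?case using letter_in_word_ball[OF assms(1)] by blast
next
  case (inv h)
  then show ?case using letter_in_word_ball[OF assms(1)] by blast
next
  case (eng h1 h2)
  then show ?case using word_ball_mult[OF assms(1)] by blast
qed

end

lemma word_ball_subset_hom_image:
  assumes "group G" "group H" "f \<in> hom G H" "S \<subseteq> carrier G"
    and letters: "T \<union> (\<lambda>t. inv\<^bsub>H\<^esub> t) ` T \<subseteq> f ` word_ball G S K"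
  shows "word_ball H T n \<subseteq> f ` word_ball G S (K * n)"
proof -
  interpret group_hom G H f
    using assms(1-3) by (simp add: group_hom_def group_hom_axioms_def)
  have word_image: "foldr (\<otimes>\<^bsub>H\<^esub>) ls \<one>\<^bsub>H\<^esub> \<in> f ` word_ball G S (K * length ls)"
    if "set ls \<subseteq> T \<union> (\<lambda>t. inv\<^bsub>H\<^esub> t) ` T" for ls
    using that
  proof (induction ls)
    case Nil
    have "f \<one>\<^bsub>G\<^esub> \<in> f ` word_ball G S 0"
      by (rule imageI[OF one_in_word_ball])
    then show ?case by simp
  next
    case (Cons l ls)
    have "l \<in> f ` word_ball G S K"
      using Cons.prems letters by (meson list.set_intros(1) subsetD)
    then obtain w where w: "w \<in> word_ball G S K" "l = f w"
      by blast
    have "foldr (\<otimes>\<^bsub>H\<^esub>) ls \<one>\<^bsub>H\<^esub> \<in> f ` word_ball G S (K * length ls)"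
      using Cons.IH Cons.prems by simp
    then obtain v where v: "v \<in> word_ball G S (K * length ls)" "foldr (\<otimes>\<^bsub>H\<^esub>) ls \<one>\<^bsub>H\<^esub> = f v"
      by blast
    have "w \<in> carrier G" "v \<in> carrier G"
      using w(1) v(1) G.word_ball_subset_carrier[OF assms(4)] by blast+
    have "foldr (\<otimes>\<^bsub>H\<^esub>) (l # ls) \<one>\<^bsub>H\<^esub> = f w \<otimes>\<^bsub>H\<^esub> f v"
      using w(2) v(2) by simp
    also have "\<dots> = f (w \<otimes>\<^bsub>G\<^esub> v)"
      using \<open>w \<in> carrier G\<close> \<open>v \<in> carrier G\<close> by (rule hom_mult[symmetric])
    finally have "foldr (\<otimes>\<^bsub>H\<^esub>) (l # ls) \<one>\<^bsub>H\<^esub> = f (w \<otimes>\<^bsub>G\<^esub> v)" .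
    moreover have "w \<otimes>\<^bsub>G\<^esub> v \<in> word_ball G S (K * length (l # ls))"
      using G.word_ball_mult[OF assms(4) w(1) v(1)] by (simp add: add.commute)
    ultimately show ?case by blast
  qed
  show ?thesis
  proof
    fix x assume "x \<in> word_ball H T n"
    then obtain ls where ls: "x = foldr (\<otimes>\<^bsub>H\<^esub>) ls \<one>\<^bsub>H\<^esub>" "length ls \<le> n"
      "set ls \<subseteq> T \<union> (\<lambda>t. inv\<^bsub>H\<^esub> t) ` T"
      unfolding word_ball_def by blast
    have "f ` word_ball G S (K * length ls) \<subseteq> f ` word_ball G S (K * n)"
      using ls(2) by (intro image_mono word_ball_mono) simp
    then show "x \<in> f ` word_ball G S (K * n)"
      using word_image[OF ls(3)] ls(1) by blast
  qed
qed

lemma surj_hom_word_ball_lift: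
  assumes "group G" "group H" "f \<in> hom G H" "f ` carrier G = carrier H"
    and "finite_gen_set G S" "finite_gen_set H T"
  obtains K where "\<And>n. word_ball H T n \<subseteq> f ` word_ball G S (K * n)"
proof -
  let ?L = "T \<union> (\<lambda>t. inv\<^bsub>H\<^esub> t) ` T"
  have S: "S \<subseteq> carrier G" "generate G S = carrier G"
    using assms(5) by (auto simp: finite_gen_set_def)
  have "finite ?L" "?L \<subseteq> carrier H"
    using assms(6) group.inv_closed[OF assms(2)] by (auto simp: finite_gen_set_def)
  have "\<forall>l\<in>?L. \<exists>k. l \<in> f ` word_ball G S k"
  proof
    fix l assume "l \<in> ?L"
    then obtain g where g: "g \<in> carrier G" "l = f g"
      using \<open>?L \<subseteq> carrier H\<close> assms(4) by blast
    then obtain k where "g \<in> word_ball G S k"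
      using group.generate_in_word_ball[OF assms(1) S(1)] S(2) by blast
    then show "\<exists>k. l \<in> f ` word_ball G S k"
      using g(2) by blast
  qed
  then have "\<exists>k. \<forall>l\<in>?L. l \<in> f ` word_ball G S (k l)"
    by (rule bchoice)
  then obtain k where k: "\<forall>l\<in>?L. l \<in> f ` word_ball G S (k l)"
    by blast
  have "?L \<subseteq> f ` word_ball G S (sum k ?L)"
  proof
    fix l assume "l \<in> ?L"
    then have "k l \<le> sum k ?L"
      using \<open>finite ?L\<close> by (intro member_le_sum) auto
    then have "f ` word_ball G S (k l) \<subseteq> f ` word_ball G S (sum k ?L)"
      by (intro image_mono word_ball_mono)
    then show "l \<in> f ` word_ball G S (sum k ?L)"
      using k \<open>l \<in> ?L\<close> by blast
  qed
  then show ?thesis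
    using that word_ball_subset_hom_image[OF assms(1-3) S(1)] by blast
qed

context group
begin

lemma aut_orbit_self: "g \<in> carrier G \<Longrightarrow> g \<in> aut_orbit G g"
  unfolding aut_orbit_def using id_in_auto by (metis image_eqI restrict_apply')

lemma aut_orbit_subset:
  assumes "g \<in> carrier G" "h \<in> aut_orbit G g"
  shows "aut_orbit G h \<subseteq> aut_orbit G g"
proof
  fix x assume "x \<in> aut_orbit G h"
  then obtain \<psi> where \<psi>: "\<psi> \<in> auto G" "x = \<psi> h"
    unfolding aut_orbit_def by blast
  obtain \<phi> where \<phi>: "\<phi> \<in> auto G" "h = \<phi> g"
    using assms(2) unfolding aut_orbit_def by blast
  have "\<psi> \<otimes>\<^bsub>BijGroup (carrier G)\<^esub> \<phi> \<in> auto G"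
    using subgroup.m_closed[OF subgroup_auto \<psi>(1) \<phi>(1)] .
  moreover have "(\<psi> \<otimes>\<^bsub>BijGroup (carrier G)\<^esub> \<phi>) g = x"
    using \<psi> \<phi> assms(1) by (auto simp: BijGroup_def auto_def compose_def)
  ultimately show "x \<in> aut_orbit G g"
    unfolding aut_orbit_def by (metis image_eqI)
qed

end

lemma aut_orbit_image_eq:
  assumes "group G" "group H" "f ` carrier G \<subseteq> carrier H"
    and lift: "\<And>\<phi>. \<phi> \<in> auto G \<Longrightarrow> \<exists>\<psi>\<in>auto H. \<forall>g\<in>carrier G. \<psi> (f g) = f (\<phi> g)"
    and "g \<in> carrier G" "h \<in> carrier G" "aut_orbit G g = aut_orbit G h"
  shows "aut_orbit H (f g) = aut_orbit H (f h)"
proof -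
  have image_mem: "f y \<in> aut_orbit H (f x)" if x: "x \<in> carrier G" and y: "y \<in> aut_orbit G x" for x y
  proof -
    obtain \<phi> where "\<phi> \<in> auto G" "y = \<phi> x"
      using y unfolding aut_orbit_def by blast
    then obtain \<psi> where "\<psi> \<in> auto H" "\<psi> (f x) = f y"
      using lift x by blast
    then show ?thesis
      unfolding aut_orbit_def by (metis image_eqI)
  qed
  have "h \<in> aut_orbit G g" "g \<in> aut_orbit G h"
    using group.aut_orbit_self[OF assms(1)] assms(5-7) by auto
  then have "f h \<in> aut_orbit H (f g)" "f g \<in> aut_orbit H (f h)"
    using image_mem assms(5,6) by auto
  moreover have "f g \<in> carrier H" "f h \<in> carrier H"
    using assms(3,5,6) by auto
  ultimately show ?thesis
    using group.aut_orbit_subset[OF assms(2)] by (intro subset_antisym)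
qed

lemma aut_growth_le_of_hom_image:
  assumes "group G" "group H" "f ` carrier G \<subseteq> carrier H"
    and lift: "\<And>\<phi>. \<phi> \<in> auto G \<Longrightarrow> \<exists>\<psi>\<in>auto H. \<forall>g\<in>carrier G. \<psi> (f g) = f (\<phi> g)"
    and "finite S" "S \<subseteq> carrier G"
    and balls: "word_ball H T n \<subseteq> f ` word_ball G S m"
  shows "aut_growth H T n \<le> aut_growth G S m"
proof -
  let ?B = "word_ball G S m"
  have "finite ?B" "?B \<subseteq> carrier G"
    using finite_word_ball[OF assms(5)] group.word_ball_subset_carrier[OF assms(1,6)] by auto
  have "aut_growth H T n \<le> card ((\<lambda>g. aut_orbit H (f g)) ` ?B)"
    unfolding aut_growth_def using balls \<open>finite ?B\<close> by (intro card_mono) auto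
  also have "\<dots> \<le> card (aut_orbit G ` ?B)"
  proof (rule card_image_le_card_image[OF \<open>finite ?B\<close>])
    fix x y assume "x \<in> ?B" "y \<in> ?B" "aut_orbit G x = aut_orbit G y"
    then show "aut_orbit H (f x) = aut_orbit H (f y)"
      using \<open>?B \<subseteq> carrier G\<close> by (intro aut_orbit_image_eq[OF assms(1-4)]) auto
  qed
  finally show ?thesis
    unfolding aut_growth_def .
qed

lemma aut_growth_le_of_surj_hom:
  assumes "group G" "group H" "f \<in> hom G H" "f ` carrier G = carrier H"
    and lift: "\<And>\<phi>. \<phi> \<in> auto G \<Longrightarrow> \<exists>\<psi>\<in>auto H. \<forall>g\<in>carrier G. \<psi> (f g) = f (\<phi> g)"
    and "finite_gen_set G S" "finite_gen_set H T"
  shows "aut_growth H T \<preccurlyeq> aut_growth G S"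
proof -
  obtain K where balls: "\<And>n. word_ball H T n \<subseteq> f ` word_ball G S (K * n)"
    using surj_hom_word_ball_lift[OF assms(1-4,6,7)] by blast
  have bound: "aut_growth H T n \<le> aut_growth G S ((K + 1) * n + (K + 1))" for n
  proof (rule aut_growth_le_of_hom_image[OF assms(1,2) _ lift])
    show "f ` carrier G \<subseteq> carrier H" "finite S" "S \<subseteq> carrier G"
      using assms(4,6) by (auto simp: finite_gen_set_def)
    have "word_ball G S (K * n) \<subseteq> word_ball G S ((K + 1) * n + (K + 1))"
      by (rule word_ball_mono) simp
    then show "word_ball H T n \<subseteq> f ` word_ball G S ((K + 1) * n + (K + 1))"
      using balls[of n] by blast
  qed
  show ?thesis
    unfolding growth_le_def
  proof (intro exI[of _ "K + 1"] conjI allI)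
    show "aut_growth H T n \<le> (K + 1) * aut_growth G S ((K + 1) * n + (K + 1)) + (K + 1)" for n
      using bound[of n] by (rule le_trans) simp
  qed simp
qed

context group
begin

lemma conjugation_in_auto:
  assumes "x \<in> carrier G"
  shows "(\<lambda>h\<in>carrier G. x \<otimes> h \<otimes> inv x) \<in> auto G"
proof -
  have "x \<otimes> (a \<otimes> b) \<otimes> inv x = (x \<otimes> a \<otimes> inv x) \<otimes> (x \<otimes> b \<otimes> inv x)"
    if "a \<in> carrier G" "b \<in> carrier G" for a b
    using assms that by (simp add: m_assoc flip: m_assoc[of "inv x" x])
  then have "(\<lambda>h\<in>carrier G. x \<otimes> h \<otimes> inv x) \<in> hom G G"
    using assms by (auto intro!: homI)
  then show ?thesis
    using conjugation_is_bij[OF assms] by (simp add: auto_def Bij_def)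
qed

lemma characteristic_imp_normal:
  assumes "characteristic N G"
  shows "N \<lhd> G"
proof -
  have "subgroup N G"
    using assms by (simp add: characteristic_def)
  moreover have "x \<otimes> h \<otimes> inv x \<in> N" if "x \<in> carrier G" "h \<in> N" for x h
  proof -
    define c where "c = (\<lambda>h\<in>carrier G. x \<otimes> h \<otimes> inv x)"
    have "h \<in> carrier G"
      using that(2) subgroup.mem_carrier[OF \<open>subgroup N G\<close>] by blast
    then have "x \<otimes> h \<otimes> inv x = c h"
      by (simp add: c_def)
    also have "\<dots> \<in> c ` N"
      using that(2) by (rule imageI)
    also have "c ` N = N"
      using assms conjugation_in_auto[OF that(1)] unfolding characteristic_def c_def by blast
    finally show ?thesis .
  qed
  ultimately show ?thesis
    using normal_inv_iff by blast
qed

lemma auto_image_r_coset: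
  assumes "\<phi> \<in> auto G" "\<phi> ` N = N" "N \<subseteq> carrier G" "g \<in> carrier G"
  shows "\<phi> ` (N #> g) = N #> \<phi> g"
proof -
  have "\<phi> ` (N #> g) = (\<lambda>n. \<phi> (n \<otimes> g)) ` N"
    by (auto simp: r_coset_def)
  also have "\<dots> = (\<lambda>n. \<phi> n \<otimes> \<phi> g) ` N"
  proof (rule image_cong[OF refl])
    fix n assume "n \<in> N"
    then show "\<phi> (n \<otimes> g) = \<phi> n \<otimes> \<phi> g"
      using assms(1,3,4) by (auto simp: auto_def intro: hom_mult)
  qed
  also have "\<dots> = (\<lambda>n. n \<otimes> \<phi> g) ` (\<phi> ` N)"
    by (simp add: image_image)
  also have "\<dots> = N #> \<phi> g"
    unfolding assms(2) by (auto simp: r_coset_def)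
  finally show ?thesis .
qed

lemma characteristic_induced_auto:
  assumes "characteristic N G" "\<phi> \<in> auto G"
  shows "(\<lambda>U\<in>carrier (G Mod N). \<phi> ` U) \<in> auto (G Mod N)"
proof -
  interpret normal N G
    using characteristic_imp_normal[OF assms(1)] .
  define \<psi> where "\<psi> = (\<lambda>U\<in>carrier (G Mod N). \<phi> ` U)"
  have \<phi>: "\<phi> \<in> hom G G" "bij_betw \<phi> (carrier G) (carrier G)"
    using assms(2) by (auto simp: auto_def Bij_def)
  have car: "carrier (G Mod N) = (\<lambda>x. N #> x) ` carrier G"
    by (rule carrier_FactGroup)
  have \<psi>_coset: "\<psi> (N #> g) = N #> \<phi> g" if "g \<in> carrier G" for g
  proof -
    have "N #> g \<in> carrier (G Mod N)"
      using car that by blast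
    moreover have "\<phi> ` N = N"
      using assms unfolding characteristic_def by blast
    ultimately show ?thesis
      unfolding \<psi>_def using auto_image_r_coset[OF assms(2) _ subset that] by simp
  qed
  have \<phi>_carrier: "\<phi> g \<in> carrier G" if "g \<in> carrier G" for g
    using \<phi>(1) that by (rule hom_in_carrier)
  have hom: "\<psi> \<in> hom (G Mod N) (G Mod N)"
  proof (rule homI)
    fix U assume "U \<in> carrier (G Mod N)"
    then show "\<psi> U \<in> carrier (G Mod N)"
      using car \<psi>_coset \<phi>_carrier by auto
  next
    fix U V assume "U \<in> carrier (G Mod N)" "V \<in> carrier (G Mod N)"
    then obtain x y where "x \<in> carrier G" "U = N #> x" "y \<in> carrier G" "V = N #> y"
      using car by auto
    then show "\<psi> (U \<otimes>\<^bsub>G Mod N\<^esub> V) = \<psi> U \<otimes>\<^bsub>G Mod N\<^esub> \<psi> V"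
      using \<phi>(1) \<psi>_coset \<phi>_carrier by (simp add: rcos_sum hom_mult)
  qed
  have "carrier (G Mod N) \<subseteq> Pow (carrier G)"
    using car r_coset_subset_G[OF subset] by auto
  then have "inj_on (image \<phi>) (carrier (G Mod N))"
    using inj_on_image_Pow[OF bij_betw_imp_inj_on[OF \<phi>(2)]] by (rule inj_on_subset[rotated])
  then have inj: "inj_on \<psi> (carrier (G Mod N))"
    unfolding \<psi>_def by (simp add: inj_on_def)
  have "\<psi> ` carrier (G Mod N) = (\<lambda>x. N #> x) ` (\<phi> ` carrier G)"
    unfolding car image_image using \<psi>_coset by simp
  then have surj: "\<psi> ` carrier (G Mod N) = carrier (G Mod N)"
    using \<phi>(2) car by (simp add: bij_betw_def)
  have "\<psi> \<in> extensional (carrier (G Mod N))"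
    unfolding \<psi>_def by simp
  then show ?thesis
    using hom inj surj unfolding \<psi>_def[symmetric] by (simp add: auto_def Bij_def bij_betw_def)
qed

lemma characteristic_auto_lift:
  assumes "characteristic N G" "\<phi> \<in> auto G"
  shows "\<exists>\<psi>\<in>auto (G Mod N). \<forall>g\<in>carrier G. \<psi> (N #> g) = N #> \<phi> g"
proof
  show "(\<lambda>U\<in>carrier (G Mod N). \<phi> ` U) \<in> auto (G Mod N)"
    using assms by (rule characteristic_induced_auto)
  have "N \<subseteq> carrier G" "\<phi> ` N = N"
    using assms by (auto simp: characteristic_def subgroup.subset)
  then show "\<forall>g\<in>carrier G. (\<lambda>U\<in>carrier (G Mod N). \<phi> ` U) (N #> g) = N #> \<phi> g"
    using auto_image_r_coset[OF assms(2)] by (auto simp: carrier_FactGroup)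
qed

end

theorem mainTheorem13:
  fixes G :: "('a, 'b) monoid_scheme" and N :: "'a set"
    and S :: "'a set" and T :: "'a set set"
  assumes "group G"
    and "finite_gen_set G S"
    and "characteristic N G"
    and "finite_gen_set (G Mod N) T"
  shows "aut_growth (G Mod N) T \<preccurlyeq> aut_growth G S"
proof -
  interpret normal N G
    using group.characteristic_imp_normal[OF assms(1,3)] .
  show ?thesis
  proof (rule aut_growth_le_of_surj_hom[OF assms(1) factorgroup_is_group r_coset_hom_Mod _ _ assms(2,4)])
    show "(\<lambda>g. N #>\<^bsub>G\<^esub> g) ` carrier G = carrier (G Mod N)"
      by (simp add: carrier_FactGroup)
    show "\<exists>\<psi>\<in>auto (G Mod N). \<forall>g\<in>carrier G. \<psi> (N #>\<^bsub>G\<^esub> g) = N #>\<^bsub>G\<^esub> \<phi> g"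
      if "\<phi> \<in> auto G" for \<phi>
      using characteristic_auto_lift[OF assms(3) that] .
  qed
qed

end
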